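(* Let $f,g$ be the identity (value $aq$ for ability $a$ in job $q$). In the early contracting game with fully informative grading in which all schools have student abilities uniformly distributed on $[0,1]$, the price of anarchy is at most $4/3$.
   Context: Students form a continuum of unit mass; every school (a continuum of infinitesimal schools) has abilities uniformly distributed on $[0,1]$. Jobs form a continuum of unit mass with qualities in $[0,1]$, continuous CDF $\mu$ with positive density. $Q_T$ is the nondecreasing assortative map (students with ability at most $a$ get exactly the jobs with quality at most $Q_T(a)$). Grading is fully informative. Agents are risk neutral. Early contracting game: stage 1, a job may contract with a uniformly random student of a school (expected ability $1/2$); stage 2, remaining students matched to remaining jobs assortatively by true ability via increasing $\hat Q$. Equilibrium: (1) a stage-1 contract between a school of average $\hat a$ and job $q$ requires $\hat Q^{-1}(q)\le\hat a$ and the school's remaining students' average stage-2 quality at most $q$; (2) no school of average $\hat a$ with stage-2 students and job $q$ with $\hat Q^{-1}(q)<\hat a$ and the school's average stage-2 quality below $q$; (3) among stage-1 jobs, better jobs go to schools of no lower average. Welfare of an assignment: $\int_0^1 q\,\mathbb{E}[A(q)]\,d\mu(q)$ with $A(q)$ the ability of the student assigned to job $q$. Price of anarchy = welfare of $Q_T$ divided by the worst equilibrium welfare. *)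

theory Defs
  imports "HOL-Analysis.Analysis"
begin

(* All schools have abilities uniform on [0,1], hence every school has
   average ability 1/2. *)

definition is_job_density :: "(real \<Rightarrow> real) \<Rightarrow> bool" where
  "is_job_density f \<longleftrightarrow> f \<in> borel_measurable lborel \<and> (\<forall>q\<in>{0..1}. 0 < f q)
     \<and> set_integrable lborel {0..1} f \<and> (LINT q:{0..1}|lborel. f q) = 1"

definition job_cdf :: "(real \<Rightarrow> real) \<Rightarrow> real \<Rightarrow> real" where
  "job_cdf f q = (LINT t:{0..q}|lborel. f t)"

(* Q_T^{-1}(q): ability of the student assigned to job q under the assortative map Q_T
   (students with ability <= a get exactly the jobs with quality <= Q_T(a), i.e. a = mu(Q_T(a))) *)
definition QT_inv :: "(real \<Rightarrow> real) \<Rightarrow> real \<Rightarrow> real" where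
  "QT_inv f q = job_cdf f q"

(* Stage-1 contracting profile: s q in [0,1] is the fraction of jobs of quality q that contract
   in stage 1 (a measurable set S of stage-1 jobs is the special case s = indicator S). *)
definition stage1_mass :: "(real \<Rightarrow> real) \<Rightarrow> (real \<Rightarrow> real) \<Rightarrow> real" where
  "stage1_mass f s = (LINT q:{0..1}|lborel. f q * s q)"

(* Stage 2: remaining students (mass 1 - m, abilities uniform on [0,1] since stage-1 students are
   uniformly random draws) matched assortatively to the remaining jobs.
   Qhat_inv f s q = ability a such that the stage-2 students of ability <= a have exactly the
   same mass as the stage-2 jobs of quality <= q, i.e. Qhat^{-1}(q). *)
definition Qhat_inv :: "(real \<Rightarrow> real) \<Rightarrow> (real \<Rightarrow> real) \<Rightarrow> real \<Rightarrow> real" where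
  "Qhat_inv f s q = (LINT t:{0..q}|lborel. f t * (1 - s t)) / (1 - stage1_mass f s)"

definition Qhat :: "(real \<Rightarrow> real) \<Rightarrow> (real \<Rightarrow> real) \<Rightarrow> real \<Rightarrow> real" where
  "Qhat f s a = Inf {q \<in> {0..1}. a \<le> Qhat_inv f s q}"

(* Average stage-2 quality of a school's stage-2 students (abilities uniform on [0,1]);
   this is the same for every school. *)
definition stage2_avg_quality :: "(real \<Rightarrow> real) \<Rightarrow> (real \<Rightarrow> real) \<Rightarrow> real" where
  "stage2_avg_quality f s = (LINT a:{0..1}|lborel. Qhat f s a)"

(* Equilibrium of the early contracting game (all schools have average ability 1/2).
   (1) stage-1 contracts: Qhat^{-1}(q) <= 1/2 and average stage-2 quality <= q;
   (2) no stage-2 job q with Qhat^{-1}(q) < 1/2 and average stage-2 quality < q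
       (schools with stage-2 students exist since stage-1 mass < 1);
   (3) is vacuous because all schools have the same average 1/2. *)
definition early_eq :: "(real \<Rightarrow> real) \<Rightarrow> (real \<Rightarrow> real) \<Rightarrow> bool" where
  "early_eq f s \<longleftrightarrow> s \<in> borel_measurable lborel \<and> (\<forall>q. 0 \<le> s q \<and> s q \<le> 1)
     \<and> stage1_mass f s < 1
     \<and> (\<forall>q\<in>{0..1}. 0 < s q \<longrightarrow> Qhat_inv f s q \<le> 1/2 \<and> stage2_avg_quality f s \<le> q)
     \<and> (\<forall>q\<in>{0..1}. s q < 1 \<longrightarrow> \<not> (Qhat_inv f s q < 1/2 \<and> stage2_avg_quality f s < q))"

definition eq_ability :: "(real \<Rightarrow> real) \<Rightarrow> (real \<Rightarrow> real) \<Rightarrow> real \<Rightarrow> real" where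
  "eq_ability f s q = s q * (1/2) + (1 - s q) * Qhat_inv f s q"

definition welfare :: "(real \<Rightarrow> real) \<Rightarrow> (real \<Rightarrow> real) \<Rightarrow> real" where
  "welfare f A = (LINT q:{0..1}|lborel. f q * (q * A q))"

end

(*
  Since q = int_0^1 [t < q] dt, the welfare int q E[A(q)] dmu(q) of an assignment equals
  int_0^1 W(t) dt, where W(t) is the welfare generated by the jobs of quality above t.  For the
  assortative matching W(t) = (1 - mu(t)^2)/2.  In an equilibrium with stage-1 mass m, stage-1 job
  distribution S and stage-2 rank y(t) = Qhat^-1(t), W(t) = (m - S(t))/2 + (1 - m)(1 - y(t)^2)/2.
  Every stage-1 job has rank at most 1/2 and quality at least the average stage-2 quality c; hence
  below c there are no stage-1 jobs and y <= 1/2, while above any job of rank more than 1/2 there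
  are none either.  This gives the pointwise bound 3 W_T(t) <= 4 W_E(t) + (1 - y(t) - [t < c])/3.
  The correction term integrates to a nonpositive number: c is the integral of Qhat, a generalized
  inverse of y, so int_0^1 (1 - y) <= c.  Without stage-1 contracts both assignments coincide.
*)

theory Submission
  imports Defs
begin

lemma integrable_mult_bounded:
  fixes h g :: "'a \<Rightarrow> real"
  assumes "integrable M h" "g \<in> borel_measurable M" "\<And>x. \<bar>g x\<bar> \<le> B"
  shows "integrable M (\<lambda>x. h x * g x)"
proof (rule Bochner_Integration.integrable_bound[where f="\<lambda>x. B * h x"])
  show "AE x in M. norm (h x * g x) \<le> norm (B * h x)"
  proof (intro AE_I2)
    fix x
    have "\<bar>g x\<bar> \<le> \<bar>B\<bar>" using assms(3)[of x] by linarith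
    then show "norm (h x * g x) \<le> norm (B * h x)"
      by (metis abs_ge_zero abs_mult mult.commute mult_right_mono real_norm_def)
  qed
qed (use assms in auto)

lemma set_integrable_bounded:
  fixes g :: "real \<Rightarrow> real"
  assumes "g \<in> borel_measurable lborel" "\<And>x. x \<in> {a..b} \<Longrightarrow> \<bar>g x\<bar> \<le> B"
  shows "set_integrable lborel {a..b} g"
  unfolding set_integrable_def
proof (rule Bochner_Integration.integrable_bound[where f="\<lambda>x. B * indicator {a..b} x"])
  show "AE x in lborel. norm (indicator {a..b} x *\<^sub>R g x) \<le> norm (B * indicator {a..b} x :: real)"
    using assms(2) by (intro AE_I2) (auto simp: indicator_def order_trans[OF _ abs_ge_self])
  show "integrable lborel (\<lambda>x. B * indicator {a..b} x :: real)"
    by (intro integrable_mult_right integrable_real_indicator) (auto simp: emeasure_lborel_Icc_eq)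
qed (use assms in auto)

lemma ennreal_set_integral_eq_nn_integral:
  fixes g :: "'a \<Rightarrow> real"
  assumes "set_integrable M A g" "\<And>x. x \<in> A \<Longrightarrow> 0 \<le> g x"
  shows "ennreal (LINT x:A|M. g x) = (\<integral>\<^sup>+x. ennreal (indicator A x * g x) \<partial>M)"
  using assms unfolding set_integrable_def set_lebesgue_integral_def real_scaleR_def
  by (intro nn_integral_eq_integral[symmetric]) (auto simp: indicator_def)

section \<open>Running integrals\<close>

definition running_integral :: "(real \<Rightarrow> real) \<Rightarrow> real \<Rightarrow> real" where
  "running_integral h x = (\<integral>r. h r * indicator {..x} r \<partial>lborel)"

lemma running_integral_nonneg:
  "(\<And>r. 0 \<le> h r) \<Longrightarrow> 0 \<le> running_integral h x"
  unfolding running_integral_def by (auto intro!: integral_nonneg_AE)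

lemma running_integral_mono:
  assumes "integrable lborel h" "\<And>r. 0 \<le> h r"
  shows "mono (running_integral h)"
  unfolding running_integral_def using assms
  by (intro monoI integral_mono integrable_real_mult_indicator) (auto simp: indicator_def)

lemma running_integral_le_integral:
  assumes "integrable lborel h" "\<And>r. 0 \<le> h r"
  shows "running_integral h x \<le> (\<integral>r. h r \<partial>lborel)"
  unfolding running_integral_def using assms
  by (intro integral_mono integrable_real_mult_indicator) (auto simp: indicator_def)

lemma running_integral_add_tail:
  assumes "integrable lborel h"
  shows "running_integral h x + (\<integral>r. h r * indicator {x<..} r \<partial>lborel) = (\<integral>r. h r \<partial>lborel)"
proof -
  have "running_integral h x + (\<integral>r. h r * indicator {x<..} r \<partial>lborel)
      = (\<integral>r. h r * indicator {..x} r + h r * indicator {x<..} r \<partial>lborel)"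
    unfolding running_integral_def using assms by (simp add: integrable_real_mult_indicator)
  also have "\<dots> = (\<integral>r. h r \<partial>lborel)"
    by (intro Bochner_Integration.integral_cong) (auto simp: indicator_def)
  finally show ?thesis .
qed

lemma running_integral_eq_0:
  "(\<And>r. r \<le> x \<Longrightarrow> h r = 0) \<Longrightarrow> running_integral h x = 0"
  unfolding running_integral_def
  by (subst Bochner_Integration.integral_cong[where g="\<lambda>_. 0"]) (auto simp: indicator_def)

lemma running_integral_eq_integral:
  "(\<And>r. x < r \<Longrightarrow> h r = 0) \<Longrightarrow> running_integral h x = (\<integral>r. h r \<partial>lborel)"
  unfolding running_integral_def
  by (intro Bochner_Integration.integral_cong) (auto simp: indicator_def not_le)

lemma running_integral_add:
  assumes "integrable lborel g" "integrable lborel h"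
  shows "running_integral (\<lambda>r. g r + h r) x = running_integral g x + running_integral h x"
  unfolding running_integral_def distrib_right
  using assms by (simp add: integrable_real_mult_indicator)

lemma running_integral_mult_left:
  "running_integral (\<lambda>r. c * h r) x = c * running_integral h x"
  unfolding running_integral_def by (simp add: mult.assoc)

lemma borel_measurable_running_integral:
  assumes "integrable lborel h" "\<And>r. 0 \<le> h r"
  shows "running_integral h \<in> borel_measurable lborel"
  using borel_measurable_mono[OF running_integral_mono[OF assms]] by simp

lemma nn_integral_below_diagonal_double:
  fixes h :: "real \<Rightarrow> real"
  assumes [measurable]: "h \<in> borel_measurable lborel" and hn: "\<And>r. 0 \<le> h r"
  defines "X \<equiv> (\<integral>\<^sup>+q. \<integral>\<^sup>+r. ennreal (h q * h r * of_bool (r \<le> q)) \<partial>lborel \<partial>lborel)"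
  shows "X + X = (\<integral>\<^sup>+r. ennreal (h r) \<partial>lborel) * (\<integral>\<^sup>+r. ennreal (h r) \<partial>lborel)"
proof -
  define below where "below q r = ennreal (h q * h r * of_bool (r \<le> q))" for q r
  have below_meas: "case_prod below \<in> borel_measurable (lborel \<Otimes>\<^sub>M lborel)"
    and below_swap_meas: "(\<lambda>(q, r). below r q) \<in> borel_measurable (lborel \<Otimes>\<^sub>M lborel)"
    unfolding below_def split_beta' by measurable
  have "X = (\<integral>\<^sup>+q. \<integral>\<^sup>+r. below r q \<partial>lborel \<partial>lborel)"
    unfolding X_def below_def[symmetric] by (rule lborel_pair.Fubini'[OF below_meas, symmetric])
  then have "X + X = (\<integral>\<^sup>+q. (\<integral>\<^sup>+r. below q r \<partial>lborel) + (\<integral>\<^sup>+r. below r q \<partial>lborel) \<partial>lborel)"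
    unfolding X_def below_def[symmetric]
    using lborel.borel_measurable_nn_integral[OF below_meas]
      lborel.borel_measurable_nn_integral[OF below_swap_meas]
    by (subst nn_integral_add) auto
  also have "\<dots> = (\<integral>\<^sup>+q. \<integral>\<^sup>+r. ennreal (h q) * ennreal (h r) \<partial>lborel \<partial>lborel)"
  proof (intro nn_integral_cong)
    fix q
    have "AE r in lborel. below q r + below r q = ennreal (h q) * ennreal (h r)"
      using AE_lborel_singleton[of q] by eventually_elim
        (use hn in \<open>auto simp: below_def ennreal_mult mult.commute\<close>)
    then show "(\<integral>\<^sup>+r. below q r \<partial>lborel) + (\<integral>\<^sup>+r. below r q \<partial>lborel)
        = (\<integral>\<^sup>+r. ennreal (h q) * ennreal (h r) \<partial>lborel)"
      unfolding below_def by (subst nn_integral_add[symmetric]) (auto intro!: nn_integral_cong_AE)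
  qed
  also have "\<dots> = (\<integral>\<^sup>+r. ennreal (h r) \<partial>lborel) * (\<integral>\<^sup>+r. ennreal (h r) \<partial>lborel)"
    by (simp add: nn_integral_cmult nn_integral_multc)
  finally show ?thesis .
qed

lemma integral_mult_running_integral:
  assumes hi: "integrable lborel h" and hn: "\<And>r. 0 \<le> h r"
  shows "(\<integral>q. h q * running_integral h q \<partial>lborel) = (\<integral>q. h q \<partial>lborel)\<^sup>2 / 2"
proof -
  have [measurable]: "h \<in> borel_measurable lborel"
    using hi by auto
  define I where "I = (\<integral>q. h q * running_integral h q \<partial>lborel)"
  define T where "T = (\<integral>q. h q \<partial>lborel)"
  have I_nonneg: "0 \<le> I" and T_nonneg: "0 \<le> T"
    using hn by (auto simp: I_def T_def running_integral_nonneg intro!: integral_nonneg_AE)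
  have inner: "(\<integral>\<^sup>+r. ennreal (h q * h r * of_bool (r \<le> q)) \<partial>lborel)
      = ennreal (h q * running_integral h q)" for q
  proof -
    have "(\<integral>\<^sup>+r. ennreal (h q * h r * of_bool (r \<le> q)) \<partial>lborel)
        = ennreal (h q) * (\<integral>\<^sup>+r. ennreal (h r * indicator {..q} r) \<partial>lborel)"
      using hn by (subst nn_integral_cmult[symmetric])
        (auto simp: ennreal_mult mult.assoc indicator_def intro!: nn_integral_cong)
    also have "(\<integral>\<^sup>+r. ennreal (h r * indicator {..q} r) \<partial>lborel) = ennreal (running_integral h q)"
      unfolding running_integral_def using hi hn
      by (intro nn_integral_eq_integral integrable_real_mult_indicator) auto
    finally show ?thesis using hn by (simp add: ennreal_mult running_integral_nonneg)
  qed
  have "integrable lborel (\<lambda>q. h q * running_integral h q)"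
    using hi hn running_integral_nonneg running_integral_le_integral
    by (intro integrable_mult_bounded[where B=T] borel_measurable_running_integral) (auto simp: T_def)
  then have "(\<integral>\<^sup>+q. \<integral>\<^sup>+r. ennreal (h q * h r * of_bool (r \<le> q)) \<partial>lborel \<partial>lborel) = ennreal I"
    unfolding inner I_def using hn
    by (intro nn_integral_eq_integral) (auto simp: running_integral_nonneg)
  moreover have "(\<integral>\<^sup>+r. ennreal (h r) \<partial>lborel) = ennreal T"
    unfolding T_def using hi hn by (intro nn_integral_eq_integral) auto
  ultimately have "ennreal (I + I) = ennreal (T * T)"
    using nn_integral_below_diagonal_double[of h] hi hn
    by (simp only: ennreal_plus[OF I_nonneg I_nonneg] ennreal_mult[OF T_nonneg T_nonneg]) auto
  then show ?thesis
    using I_nonneg T_nonneg by (simp add: I_def T_def power2_eq_square)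
qed

lemma running_integral_mult_running_integral:
  assumes hi: "integrable lborel h" and hn: "\<And>r. 0 \<le> h r"
  shows "running_integral (\<lambda>q. h q * running_integral h q) t = (running_integral h t)\<^sup>2 / 2"
proof -
  define ht where "ht r = h r * indicator {..t} r" for r
  have ht_below: "running_integral ht q = running_integral h q" if "q \<le> t" for q
    unfolding running_integral_def ht_def using that
    by (intro Bochner_Integration.integral_cong) (auto simp: indicator_def)
  have "running_integral (\<lambda>q. h q * running_integral h q) t
      = (\<integral>q. ht q * running_integral ht q \<partial>lborel)"
    unfolding running_integral_def[of "\<lambda>q. h q * running_integral h q"]
    by (intro Bochner_Integration.integral_cong) (auto simp: ht_def ht_below indicator_def)
  also have "\<dots> = (\<integral>q. ht q \<partial>lborel)\<^sup>2 / 2"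
    using hi hn
    by (intro integral_mult_running_integral) (auto simp: ht_def integrable_real_mult_indicator)
  finally show ?thesis by (simp add: ht_def running_integral_def)
qed

section \<open>Layer-cake identities on the unit interval\<close>

lemma integral_mult_id_eq_tail_integral:
  fixes g :: "real \<Rightarrow> real"
  assumes gi: "integrable lborel g" and gn: "\<And>q. 0 \<le> g q" and g0: "\<And>q. q \<notin> {0..1} \<Longrightarrow> g q = 0"
  shows "(\<integral>q. g q * q \<partial>lborel) = (LINT t:{0..1}|lborel. running_integral g 1 - running_integral g t)"
proof -
  have [measurable]: "g \<in> borel_measurable lborel"
    using gi by auto
  note borel_measurable_running_integral[OF gi gn, measurable]
  have g_mult: "g q * q = g q * (indicator {0..1} q * q)" and g_mult_nonneg: "0 \<le> g q * q" for q
    using gn[of q] g0[of q] by (cases "q \<in> {0..1}"; simp)+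
  have tail_nonneg: "0 \<le> running_integral g 1 - running_integral g t" if "t \<le> 1" for t
    using running_integral_mono[OF gi gn] that by (simp add: mono_def)
  define F where "F q t = ennreal (g q * of_bool (t < q) * indicator {0..1} t)" for q t
  have F_meas: "case_prod F \<in> borel_measurable (lborel \<Otimes>\<^sub>M lborel)"
    unfolding F_def split_beta' by measurable
  have F_t: "(\<integral>\<^sup>+t. F q t \<partial>lborel) = ennreal (g q * q)" for q
  proof (cases "q \<in> {0..1}")
    case True
    then have "(\<integral>\<^sup>+t. F q t \<partial>lborel) = (\<integral>\<^sup>+t. ennreal (g q) * indicator {0..<q} t \<partial>lborel)"
      unfolding F_def by (intro nn_integral_cong) (auto simp: indicator_def)
    then show ?thesis using True gn[of q] by (simp add: nn_integral_cmult_indicator ennreal_mult)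
  qed (simp add: F_def g0)
  have F_q: "(\<integral>\<^sup>+q. F q t \<partial>lborel)
      = ennreal (indicator {0..1} t * (running_integral g 1 - running_integral g t))" for t
  proof (cases "t \<in> {0..1}")
    case True
    have "(\<integral>r. g r * indicator {t<..} r \<partial>lborel) = running_integral g 1 - running_integral g t"
      using running_integral_add_tail[OF gi, of t] running_integral_eq_integral[of 1 g] g0 by force
    moreover have "(\<integral>\<^sup>+q. F q t \<partial>lborel) = (\<integral>\<^sup>+q. ennreal (g q * indicator {t<..} q) \<partial>lborel)"
      unfolding F_def using True by (intro nn_integral_cong) (auto simp: indicator_def)
    ultimately show ?thesis
      using True gi gn by (simp add: nn_integral_eq_integral integrable_real_mult_indicator)
  qed (simp add: F_def)
  have "integrable lborel (\<lambda>q. g q * q)"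
    unfolding g_mult by (rule integrable_mult_bounded[OF gi, where B=1]) (auto simp: indicator_def)
  then have "ennreal (\<integral>q. g q * q \<partial>lborel) = (\<integral>\<^sup>+q. \<integral>\<^sup>+t. F q t \<partial>lborel \<partial>lborel)"
    unfolding F_t using g_mult_nonneg by (intro nn_integral_eq_integral[symmetric]) auto
  also have "\<dots> = (\<integral>\<^sup>+t. \<integral>\<^sup>+q. F q t \<partial>lborel \<partial>lborel)"
    by (rule lborel_pair.Fubini'[OF F_meas, symmetric])
  also have "\<dots> = ennreal (LINT t:{0..1}|lborel. running_integral g 1 - running_integral g t)"
    unfolding F_q using tail_nonneg running_integral_nonneg[OF gn]
    by (intro ennreal_set_integral_eq_nn_integral[symmetric]
        set_integrable_bounded[where B="running_integral g 1"]) auto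
  finally show ?thesis
    using g_mult_nonneg tail_nonneg
    by (subst (asm) ennreal_inj)
      (auto simp: set_lebesgue_integral_def indicator_def intro!: integral_nonneg_AE)
qed

lemma set_integral_one_minus_le_quantile:
  fixes H Q :: "real \<Rightarrow> real"
  assumes [measurable]: "H \<in> borel_measurable lborel"
    and H_bounds: "\<And>t. t \<in> {0..1} \<Longrightarrow> 0 \<le> H t \<and> H t \<le> 1"
    and Q_mono: "mono_on {0..1} Q"
    and Q_bounds: "\<And>a. a \<in> {0..1} \<Longrightarrow> 0 \<le> Q a \<and> Q a \<le> 1"
    and quantile: "\<And>a t. a \<in> {0..1} \<Longrightarrow> t \<in> {0..1} \<Longrightarrow> H t < a \<Longrightarrow> t \<le> Q a"
  shows "(LINT t:{0..1}|lborel. 1 - H t) \<le> (LINT a:{0..1}|lborel. Q a)"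
proof -
  have Q_meas: "(\<lambda>a. indicator {0..1} a *\<^sub>R Q a) \<in> borel_measurable lborel"
    using borel_measurable_mono_on_fnc[OF Q_mono]
    by (subst (asm) borel_measurable_restrict_space_iff) auto
  have Q_int: "set_integrable lborel {0..1} Q"
    unfolding set_integrable_def
    by (rule Bochner_Integration.integrable_bound[OF _ Q_meas,
          where f="indicator {0..1} :: real \<Rightarrow> real"])
      (use Q_bounds in \<open>auto simp: emeasure_lborel_Icc_eq indicator_def intro!: AE_I2\<close>)
  define F where "F a t = ennreal (indicator {0..1} a * indicator {0..1} t * of_bool (H t < a))" for a t
  have F_meas: "case_prod F \<in> borel_measurable (lborel \<Otimes>\<^sub>M lborel)"
    unfolding F_def split_beta' by measurable
  have F_a: "(\<integral>\<^sup>+a. F a t \<partial>lborel) = ennreal (indicator {0..1} t * (1 - H t))" for t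
  proof (cases "t \<in> {0..1}")
    case True
    then have "(\<integral>\<^sup>+a. F a t \<partial>lborel) = (\<integral>\<^sup>+a. indicator {H t<..1} a \<partial>lborel)"
      unfolding F_def using H_bounds[OF True] by (intro nn_integral_cong) (auto simp: indicator_def)
    then show ?thesis using True H_bounds[OF True] by simp
  qed (simp add: F_def)
  have F_t: "(\<integral>\<^sup>+t. F a t \<partial>lborel) \<le> ennreal (indicator {0..1} a * Q a)" for a
  proof (cases "a \<in> {0..1}")
    case True
    then have "(\<integral>\<^sup>+t. F a t \<partial>lborel) \<le> (\<integral>\<^sup>+t. indicator {0..Q a} t \<partial>lborel)"
      unfolding F_def using quantile[OF True] by (intro nn_integral_mono) (auto simp: indicator_def)
    then show ?thesis using True Q_bounds[OF True] by simp
  qed (simp add: F_def)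
  have "ennreal (LINT t:{0..1}|lborel. 1 - H t) = (\<integral>\<^sup>+t. \<integral>\<^sup>+a. F a t \<partial>lborel \<partial>lborel)"
    unfolding F_a using H_bounds
    by (intro ennreal_set_integral_eq_nn_integral set_integrable_bounded[where B=1]) auto
  also have "\<dots> = (\<integral>\<^sup>+a. \<integral>\<^sup>+t. F a t \<partial>lborel \<partial>lborel)"
    by (rule lborel_pair.Fubini'[OF F_meas])
  also have "\<dots> \<le> (\<integral>\<^sup>+a. ennreal (indicator {0..1} a * Q a) \<partial>lborel)"
    by (intro nn_integral_mono F_t)
  also have "\<dots> = ennreal (LINT a:{0..1}|lborel. Q a)"
    using Q_int Q_bounds by (intro ennreal_set_integral_eq_nn_integral[symmetric]) auto
  finally show ?thesis
    using Q_bounds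
    by (subst (asm) ennreal_le_iff)
      (auto simp: set_lebesgue_integral_def indicator_def intro!: integral_nonneg_AE)
qed

lemma set_integral_indicator_lessThan:
  "0 \<le> c \<Longrightarrow> c \<le> 1 \<Longrightarrow> (LINT t:{0..1}|lborel. indicator {..<c} t) = (c::real)"
  unfolding set_lebesgue_integral_def
  by (subst Bochner_Integration.integral_cong[where g="indicator {0..<c}"]) (auto simp: indicator_def)

section \<open>Welfare above a quality threshold\<close>

text \<open>The welfare of the jobs of quality above a threshold: for the assortative matching in terms of
  the fraction \<open>x\<close> of jobs below it, for an equilibrium in terms of the stage-1 mass \<open>m\<close>, the
  stage-1 jobs \<open>S\<close> below it and its stage-2 rank \<open>y\<close>.\<close>

definition assortative_tail :: "real \<Rightarrow> real" where
  "assortative_tail x = (1 - x\<^sup>2) / 2"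

definition equilibrium_tail :: "real \<Rightarrow> real \<Rightarrow> real \<Rightarrow> real" where
  "equilibrium_tail m S y = (m - S) / 2 + (1 - m) * (1 - y\<^sup>2) / 2"

lemma tail_bound_low_rank:
  assumes "m \<le> 1" "0 \<le> y" "y \<le> 1/2"
  shows "3 * assortative_tail (S + (1 - m) * y) \<le> 4 * equilibrium_tail m S y + (1 - y) / 3"
proof -
  define u where "u = (1 - m) * y * (1 - y)"
  define v where "v = (S + (1 - m) * y - 2/3)\<^sup>2"
  have "4 * equilibrium_tail m S y + (1 - y) / 3 - 3 * assortative_tail (S + (1 - m) * y)
      = 3/2 * v + 2 * u + (1 - 2 * y) / 6"
    unfolding equilibrium_tail_def assortative_tail_def u_def v_def
    by (simp add: field_simps power2_eq_square)
  moreover have "0 \<le> u" "0 \<le> v" using assms by (simp_all add: u_def v_def)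
  ultimately show ?thesis using assms(3) by argo
qed

lemma tail_bound_no_stage1_below:
  assumes "0 \<le> y" "y \<le> 1/2"
  shows "3 * assortative_tail ((1 - m) * y) \<le> 4 * equilibrium_tail m 0 y - y / 3"
proof -
  define v where "v = (y * (1 - m) - 2/3 * y)\<^sup>2"
  have "4 * equilibrium_tail m 0 y - y / 3 - 3 * assortative_tail ((1 - m) * y)
      = 3/2 * v + (1/2 - 2/3 * y\<^sup>2 - y / 3)"
    unfolding equilibrium_tail_def assortative_tail_def v_def
    by (simp add: field_simps power2_eq_square)
  moreover have "0 \<le> v" by (simp add: v_def)
  moreover have "y\<^sup>2 \<le> y / 2"
    using mult_left_mono[of "2 * y" 1 y] assms by (simp add: power2_eq_square)
  ultimately show ?thesis using assms(2) by argo
qed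

lemma tail_bound_all_stage1_below:
  assumes "m \<le> 1" "1/2 \<le> y" "y \<le> 1"
  shows "3 * assortative_tail (m + (1 - m) * y) \<le> 4 * equilibrium_tail m m y + (1 - y) / 3"
proof -
  define u where "u = (1 - m) * (1 - y) * (2 * y - 1)"
  define v where "v = ((1 - m) * (1 - y))\<^sup>2"
  have "4 * equilibrium_tail m m y + (1 - y) / 3 - 3 * assortative_tail (m + (1 - m) * y)
      = u + 3/2 * v + (1 - y) / 3"
    unfolding equilibrium_tail_def assortative_tail_def u_def v_def
    by (simp add: field_simps power2_eq_square)
  moreover have "0 \<le> u" "0 \<le> v" using assms by (simp_all add: u_def v_def)
  ultimately show ?thesis using assms(3) by argo
qed

section \<open>Early contracting equilibria\<close>

lemma welfare_cong:
  "(\<And>q. q \<in> {0..1} \<Longrightarrow> A q = B q) \<Longrightarrow> welfare f A = welfare f B"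
  unfolding welfare_def by (rule set_lebesgue_integral_cong) auto

locale early_contracting_equilibrium =
  fixes f s :: "real \<Rightarrow> real"
  assumes job_density: "is_job_density f"
    and equilibrium: "early_eq f s"
begin

lemma f_pos: "q \<in> {0..1} \<Longrightarrow> 0 < f q"
  using job_density by (auto simp: is_job_density_def)

lemma s_measurable [measurable]: "s \<in> borel_measurable lborel"
  and s_nonneg: "0 \<le> s q"
  and s_le_1: "s q \<le> 1"
  and stage1_mass_less_1: "stage1_mass f s < 1"
  using equilibrium by (auto simp: early_eq_def)

text \<open>\<open>is_job_density\<close> says nothing about \<open>f\<close> outside \<open>[0,1]\<close>, so it is cut off there.\<close>

definition job_dens :: "real \<Rightarrow> real" where
  "job_dens q = f q * indicator {0..1} q"

definition stage1_dens :: "real \<Rightarrow> real" where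
  "stage1_dens q = job_dens q * s q"

definition stage2_dens :: "real \<Rightarrow> real" where
  "stage2_dens q = job_dens q * (1 - s q)"

definition stage2_mass :: real where
  "stage2_mass = 1 - stage1_mass f s"

lemma job_dens_nonneg: "0 \<le> job_dens q"
  using f_pos[of q] by (auto simp: job_dens_def indicator_def)

lemma stage1_dens_nonneg: "0 \<le> stage1_dens q"
  by (simp add: stage1_dens_def job_dens_nonneg s_nonneg)

lemma stage2_dens_nonneg: "0 \<le> stage2_dens q"
  by (simp add: stage2_dens_def job_dens_nonneg s_le_1)

lemma integrable_job_dens: "integrable lborel job_dens"
  and integral_job_dens: "(\<integral>q. job_dens q \<partial>lborel) = 1"
  using job_density unfolding job_dens_def[abs_def]
  by (auto simp: is_job_density_def set_integrable_def set_lebesgue_integral_def mult.commute)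

lemma integrable_stage1_dens: "integrable lborel stage1_dens"
  unfolding stage1_dens_def using s_nonneg s_le_1
  by (intro integrable_mult_bounded[where B=1] integrable_job_dens) auto

lemma integrable_stage2_dens: "integrable lborel stage2_dens"
  unfolding stage2_dens_def using s_nonneg s_le_1
  by (intro integrable_mult_bounded[where B=1] integrable_job_dens) auto

lemma integral_stage1_dens: "(\<integral>q. stage1_dens q \<partial>lborel) = stage1_mass f s"
  unfolding stage1_mass_def set_lebesgue_integral_def stage1_dens_def job_dens_def
  by (simp add: ac_simps)

lemma integral_stage2_dens: "(\<integral>q. stage2_dens q \<partial>lborel) = stage2_mass"
proof -
  have "(\<integral>q. stage2_dens q \<partial>lborel) = (\<integral>q. job_dens q - stage1_dens q \<partial>lborel)"
    by (simp add: stage2_dens_def stage1_dens_def algebra_simps)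
  then show ?thesis
    using integrable_job_dens integrable_stage1_dens
    by (simp add: integral_job_dens integral_stage1_dens stage2_mass_def)
qed

lemma stage1_mass_nonneg: "0 \<le> stage1_mass f s"
  using stage1_dens_nonneg by (auto simp: integral_stage1_dens[symmetric] intro!: integral_nonneg_AE)

lemma stage2_mass_pos: "0 < stage2_mass"
  using stage1_mass_less_1 by (simp add: stage2_mass_def)

definition mu :: "real \<Rightarrow> real" where
  "mu = running_integral job_dens"

definition stage1_cdf :: "real \<Rightarrow> real" where
  "stage1_cdf = running_integral stage1_dens"

definition stage2_cdf :: "real \<Rightarrow> real" where
  "stage2_cdf = running_integral stage2_dens"

definition stage2_rank :: "real \<Rightarrow> real" where
  "stage2_rank q = stage2_cdf q / stage2_mass"

lemma mu_measurable [measurable]: "mu \<in> borel_measurable lborel"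
  and stage1_cdf_measurable [measurable]: "stage1_cdf \<in> borel_measurable lborel"
  and stage2_cdf_measurable [measurable]: "stage2_cdf \<in> borel_measurable lborel"
  unfolding mu_def stage1_cdf_def stage2_cdf_def
  by (intro borel_measurable_running_integral integrable_job_dens integrable_stage1_dens
      integrable_stage2_dens job_dens_nonneg stage1_dens_nonneg stage2_dens_nonneg)+

lemma mu_bounds: "0 \<le> mu t" "mu t \<le> 1"
  using running_integral_le_integral[OF integrable_job_dens job_dens_nonneg]
  by (auto simp: mu_def integral_job_dens running_integral_nonneg job_dens_nonneg)

lemma stage1_cdf_bounds: "0 \<le> stage1_cdf t" "stage1_cdf t \<le> stage1_mass f s"
  using running_integral_le_integral[OF integrable_stage1_dens stage1_dens_nonneg]
  by (auto simp: stage1_cdf_def integral_stage1_dens running_integral_nonneg stage1_dens_nonneg)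

lemma stage2_cdf_bounds: "0 \<le> stage2_cdf t" "stage2_cdf t \<le> stage2_mass"
  using running_integral_le_integral[OF integrable_stage2_dens stage2_dens_nonneg]
  by (auto simp: stage2_cdf_def integral_stage2_dens running_integral_nonneg stage2_dens_nonneg)

lemma stage2_rank_bounds: "0 \<le> stage2_rank t" "stage2_rank t \<le> 1"
  using stage2_cdf_bounds[of t] stage2_mass_pos by (auto simp: stage2_rank_def)

lemma stage2_rank_mono: "mono stage2_rank"
  using running_integral_mono[OF integrable_stage2_dens stage2_dens_nonneg] stage2_mass_pos
  by (auto simp: mono_def stage2_rank_def stage2_cdf_def divide_right_mono)

lemma stage2_rank_measurable [measurable]: "stage2_rank \<in> borel_measurable lborel"
  using borel_measurable_mono[OF stage2_rank_mono] by simp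

lemma mu_1: "mu 1 = 1"
proof -
  have "running_integral job_dens 1 = (\<integral>q. job_dens q \<partial>lborel)"
    by (rule running_integral_eq_integral) (simp add: job_dens_def)
  then show ?thesis by (simp add: mu_def integral_job_dens)
qed

lemma stage1_cdf_1: "stage1_cdf 1 = stage1_mass f s"
  unfolding stage1_cdf_def integral_stage1_dens[symmetric]
  by (rule running_integral_eq_integral) (simp add: stage1_dens_def job_dens_def)

lemma stage2_rank_1: "stage2_rank 1 = 1"
proof -
  have "stage2_cdf 1 = stage2_mass"
    unfolding stage2_cdf_def integral_stage2_dens[symmetric]
    by (rule running_integral_eq_integral) (simp add: stage2_dens_def job_dens_def)
  then show ?thesis using stage2_mass_pos by (simp add: stage2_rank_def)
qed

lemma mu_eq: "mu t = stage1_cdf t + stage2_mass * stage2_rank t"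
proof -
  have "mu t = running_integral (\<lambda>q. stage1_dens q + stage2_dens q) t"
    by (simp add: mu_def stage1_dens_def stage2_dens_def algebra_simps)
  then show ?thesis
    using stage2_mass_pos
    by (simp add: running_integral_add integrable_stage1_dens integrable_stage2_dens
        stage1_cdf_def stage2_rank_def stage2_cdf_def)
qed

lemma QT_inv_eq: "q \<in> {0..1} \<Longrightarrow> QT_inv f q = mu q"
  unfolding QT_inv_def job_cdf_def set_lebesgue_integral_def mu_def running_integral_def job_dens_def
  by (intro Bochner_Integration.integral_cong) (auto simp: indicator_def)

lemma Qhat_inv_eq: "q \<in> {0..1} \<Longrightarrow> Qhat_inv f s q = stage2_rank q"
  unfolding Qhat_inv_def set_lebesgue_integral_def stage2_rank_def stage2_cdf_def
    running_integral_def stage2_mass_def stage2_dens_def job_dens_def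
  by (intro arg_cong2[where f="(/)"] Bochner_Integration.integral_cong) (auto simp: indicator_def)

lemma welfare_eq_tail_integral:
  assumes [measurable]: "A \<in> borel_measurable lborel" and "\<And>q. 0 \<le> A q" "\<And>q. A q \<le> 1"
  shows "welfare f A = (LINT t:{0..1}|lborel.
    running_integral (\<lambda>q. job_dens q * A q) 1 - running_integral (\<lambda>q. job_dens q * A q) t)"
proof -
  have "welfare f A = (\<integral>q. job_dens q * A q * q \<partial>lborel)"
    unfolding welfare_def set_lebesgue_integral_def job_dens_def by (simp add: ac_simps)
  also have "\<dots> = (LINT t:{0..1}|lborel.
      running_integral (\<lambda>q. job_dens q * A q) 1 - running_integral (\<lambda>q. job_dens q * A q) t)"
    using assms job_dens_nonneg
    by (intro integral_mult_id_eq_tail_integral integrable_mult_bounded[where B=1] integrable_job_dens)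
      (auto simp: job_dens_def)
  finally show ?thesis .
qed

lemma welfare_assortative:
  "welfare f (QT_inv f) = (LINT t:{0..1}|lborel. assortative_tail (mu t))"
proof -
  have "welfare f (QT_inv f) = welfare f mu"
    by (rule welfare_cong) (simp add: QT_inv_eq)
  also have "\<dots> = (LINT t:{0..1}|lborel.
      running_integral (\<lambda>q. job_dens q * mu q) 1 - running_integral (\<lambda>q. job_dens q * mu q) t)"
    by (rule welfare_eq_tail_integral) (simp_all add: mu_bounds)
  also have "\<dots> = (LINT t:{0..1}|lborel. assortative_tail (mu t))"
  proof -
    have "running_integral (\<lambda>q. job_dens q * mu q) t = (mu t)\<^sup>2 / 2" for t
      unfolding mu_def
      by (rule running_integral_mult_running_integral[OF integrable_job_dens job_dens_nonneg])
    then show ?thesis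
      by (simp only: mu_1) (simp add: assortative_tail_def diff_divide_distrib)
  qed
  finally show ?thesis .
qed

definition equilibrium_ability :: "real \<Rightarrow> real" where
  "equilibrium_ability q = s q / 2 + (1 - s q) * stage2_rank q"

lemma equilibrium_ability_bounds: "0 \<le> equilibrium_ability q" "equilibrium_ability q \<le> 1"
  using s_nonneg[of q] s_le_1[of q] stage2_rank_bounds[of q] mult_left_le[of "stage2_rank q" "1 - s q"]
  by (auto simp: equilibrium_ability_def)

lemma running_integral_equilibrium_ability:
  "running_integral (\<lambda>q. job_dens q * equilibrium_ability q) t
    = stage1_cdf t / 2 + stage2_mass * (stage2_rank t)\<^sup>2 / 2"
proof -
  have "(\<lambda>q. job_dens q * equilibrium_ability q)
      = (\<lambda>q. 1/2 * stage1_dens q + 1/stage2_mass * (stage2_dens q * stage2_cdf q))"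
    using stage2_mass_pos
    by (auto simp: equilibrium_ability_def stage1_dens_def stage2_dens_def stage2_rank_def field_simps)
  moreover have "integrable lborel (\<lambda>q. stage2_dens q * stage2_cdf q)"
    using stage2_cdf_bounds stage2_mass_pos
    by (intro integrable_mult_bounded[where B=stage2_mass] integrable_stage2_dens) auto
  ultimately have "running_integral (\<lambda>q. job_dens q * equilibrium_ability q) t
      = 1/2 * running_integral stage1_dens t
        + 1/stage2_mass * running_integral (\<lambda>q. stage2_dens q * stage2_cdf q) t"
    by (simp only: running_integral_add running_integral_mult_left integrable_mult_right
        integrable_stage1_dens)
  also have "\<dots> = 1/2 * stage1_cdf t + 1/stage2_mass * ((stage2_cdf t)\<^sup>2 / 2)"
    unfolding stage1_cdf_def stage2_cdf_def
    by (simp only: running_integral_mult_running_integral[OF integrable_stage2_dens stage2_dens_nonneg])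
  finally show ?thesis
    using stage2_mass_pos by (simp add: stage2_rank_def power_divide power2_eq_square)
qed

lemma welfare_equilibrium:
  "welfare f (eq_ability f s)
    = (LINT t:{0..1}|lborel. equilibrium_tail (stage1_mass f s) (stage1_cdf t) (stage2_rank t))"
proof -
  have "welfare f (eq_ability f s) = welfare f equilibrium_ability"
    by (rule welfare_cong) (simp add: eq_ability_def equilibrium_ability_def Qhat_inv_eq)
  also have "\<dots> = (LINT t:{0..1}|lborel.
      running_integral (\<lambda>q. job_dens q * equilibrium_ability q) 1
      - running_integral (\<lambda>q. job_dens q * equilibrium_ability q) t)"
    by (rule welfare_eq_tail_integral[OF _ equilibrium_ability_bounds])
      (simp add: equilibrium_ability_def[abs_def])
  also have "\<dots> = (LINT t:{0..1}|lborel.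
      equilibrium_tail (stage1_mass f s) (stage1_cdf t) (stage2_rank t))"
    unfolding running_integral_equilibrium_ability stage1_cdf_1 stage2_rank_1
    by (intro set_lebesgue_integral_cong) (auto simp: equilibrium_tail_def stage2_mass_def field_simps)
  finally show ?thesis .
qed

lemma stage1_job_rank: "q \<in> {0..1} \<Longrightarrow> 0 < s q \<Longrightarrow> stage2_rank q \<le> 1/2"
  and stage1_job_quality: "q \<in> {0..1} \<Longrightarrow> 0 < s q \<Longrightarrow> stage2_avg_quality f s \<le> q"
  using equilibrium by (auto simp: early_eq_def Qhat_inv_eq)

lemma exists_stage1_job:
  assumes "0 < stage1_mass f s"
  obtains q where "q \<in> {0..1}" "0 < s q"
proof (rule ccontr)
  assume no_job: "\<not> thesis"
  have "stage1_dens q = 0" for q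
  proof (cases "q \<in> {0..1}")
    case True
    then have "\<not> 0 < s q" using that no_job by blast
    then show ?thesis using s_nonneg[of q] by (simp add: stage1_dens_def)
  qed (simp add: stage1_dens_def job_dens_def)
  then show False
    using assms by (simp add: integral_stage1_dens[symmetric])
qed

lemma stage1_cdf_eq_0:
  assumes "t < stage2_avg_quality f s"
  shows "stage1_cdf t = 0"
  unfolding stage1_cdf_def
proof (rule running_integral_eq_0)
  fix r assume "r \<le> t"
  then show "stage1_dens r = 0"
    using assms stage1_job_quality[of r] s_nonneg[of r]
    by (cases "r \<in> {0..1}") (auto simp: stage1_dens_def job_dens_def)
qed

lemma stage1_cdf_eq_mass:
  assumes "1/2 < stage2_rank t"
  shows "stage1_cdf t = stage1_mass f s"
  unfolding stage1_cdf_def integral_stage1_dens[symmetric]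
proof (rule running_integral_eq_integral)
  fix r assume "t < r"
  then have "1/2 < stage2_rank r"
    using assms stage2_rank_mono by (smt (verit) monoD)
  then show "stage1_dens r = 0"
    using stage1_job_rank[of r] s_nonneg[of r]
    by (cases "r \<in> {0..1}") (auto simp: stage1_dens_def job_dens_def)
qed

lemma assortative_tail_le:
  assumes "0 < stage1_mass f s"
  shows "3 * assortative_tail (mu t)
    \<le> 4 * equilibrium_tail (stage1_mass f s) (stage1_cdf t) (stage2_rank t)
      + ((1 - stage2_rank t) - indicator {..<stage2_avg_quality f s} t) / 3"
proof -
  define m y c where "m = stage1_mass f s" and "y = stage2_rank t" and "c = stage2_avg_quality f s"
  have mu_t: "mu t = stage1_cdf t + (1 - m) * y"
    by (simp add: mu_eq m_def y_def stage2_mass_def)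
  have "m \<le> 1" "0 \<le> y" "y \<le> 1"
    using stage1_mass_less_1 stage2_rank_bounds by (auto simp: m_def y_def)
  consider (below) "t < c" | (low) "\<not> t < c" "y \<le> 1/2" | (high) "\<not> t < c" "1/2 < y"
    by linarith
  then show ?thesis
  proof cases
    case below
    obtain q where q: "q \<in> {0..1}" "0 < s q"
      using exists_stage1_job assms by blast
    have "y \<le> stage2_rank q"
      using below stage1_job_quality[OF q] stage2_rank_mono by (simp add: y_def c_def monoD)
    then have "y \<le> 1/2"
      using stage1_job_rank[OF q] by simp
    then show ?thesis
      using tail_bound_no_stage1_below[of y m] stage1_cdf_eq_0 below \<open>0 \<le> y\<close>
      by (simp add: mu_t m_def y_def c_def)
  next
    case low
    then show ?thesis
      using tail_bound_low_rank[of m y "stage1_cdf t"] \<open>m \<le> 1\<close> \<open>0 \<le> y\<close>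
      by (simp add: mu_t m_def y_def c_def)
  next
    case high
    then show ?thesis
      using tail_bound_all_stage1_below[of m y] stage1_cdf_eq_mass \<open>m \<le> 1\<close> \<open>y \<le> 1\<close>
      by (simp add: mu_t m_def y_def c_def)
  qed
qed

lemma stage2_avg_quality_le_1: "0 < stage1_mass f s \<Longrightarrow> stage2_avg_quality f s \<le> 1"
  using exists_stage1_job stage1_job_quality by force

lemma Qhat_eq_Inf: "Qhat f s a = Inf {q \<in> {0..1}. a \<le> stage2_rank q}"
  unfolding Qhat_def by (metis (lifting) Qhat_inv_eq mem_Collect_eq)

text \<open>For \<open>a > 1\<close> the set is empty and \<open>Qhat f s a\<close> is the unspecified value \<open>Inf {}\<close>.\<close>

lemma Qhat_bounds:
  assumes "a \<le> 1"
  shows "0 \<le> Qhat f s a" "Qhat f s a \<le> 1"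
proof -
  have one: "1 \<in> {q \<in> {0..1}. a \<le> stage2_rank q}"
    using assms by (simp add: stage2_rank_1)
  then show "0 \<le> Qhat f s a"
    unfolding Qhat_eq_Inf by (intro cInf_greatest) auto
  show "Qhat f s a \<le> 1"
    unfolding Qhat_eq_Inf using one by (intro cInf_lower bdd_belowI[of _ 0]) auto
qed

lemma Qhat_mono_on: "mono_on {..1} (Qhat f s)"
proof (rule mono_onI)
  fix a b :: real assume "a \<in> {..1}" "b \<in> {..1}" "a \<le> b"
  then show "Qhat f s a \<le> Qhat f s b"
    unfolding Qhat_eq_Inf using stage2_rank_1
    by (intro cInf_superset_mono bdd_belowI[of _ 0]) auto
qed

lemma le_Qhat:
  assumes "a \<le> 1" "stage2_rank t < a"
  shows "t \<le> Qhat f s a"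
  unfolding Qhat_eq_Inf
proof (rule cInf_greatest)
  show "{q \<in> {0..1}. a \<le> stage2_rank q} \<noteq> {}"
    using assms stage2_rank_1 by auto
  fix q assume "q \<in> {q \<in> {0..1}. a \<le> stage2_rank q}"
  then show "t \<le> q"
    using assms stage2_rank_mono by (smt (verit) mem_Collect_eq monoD)
qed

lemma stage2_rank_integral_le: "(LINT t:{0..1}|lborel. 1 - stage2_rank t) \<le> stage2_avg_quality f s"
  unfolding stage2_avg_quality_def
  by (rule set_integral_one_minus_le_quantile)
    (auto simp: stage2_rank_bounds Qhat_bounds le_Qhat intro: mono_on_subset[OF Qhat_mono_on])

lemma stage2_avg_quality_nonneg: "0 \<le> stage2_avg_quality f s"
proof -
  have "0 \<le> (LINT t:{0..1}|lborel. 1 - stage2_rank t)"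
    using stage2_rank_bounds unfolding set_lebesgue_integral_def
    by (auto intro!: integral_nonneg_AE simp: indicator_def)
  then show ?thesis using stage2_rank_integral_le by linarith
qed

lemma welfare_without_stage1:
  assumes "stage1_mass f s = 0"
  shows "welfare f (eq_ability f s) = welfare f (QT_inv f)"
proof -
  have "equilibrium_tail (stage1_mass f s) (stage1_cdf t) (stage2_rank t) = assortative_tail (mu t)"
    for t
    using assms stage1_cdf_bounds[of t]
    by (simp add: mu_eq stage2_mass_def equilibrium_tail_def assortative_tail_def)
  then show ?thesis by (simp add: welfare_assortative welfare_equilibrium)
qed

lemma welfare_assortative_nonneg: "0 \<le> welfare f (QT_inv f)"
  using mu_bounds unfolding welfare_assortative set_lebesgue_integral_def assortative_tail_def
  by (auto intro!: integral_nonneg_AE simp: indicator_def power_le_one)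

lemma set_integral_below_stage2_avg_quality:
  "0 < stage1_mass f s \<Longrightarrow>
    (LINT t:{0..1}|lborel. indicator {..<stage2_avg_quality f s} t) = stage2_avg_quality f s"
  using stage2_avg_quality_nonneg stage2_avg_quality_le_1 by (simp add: set_integral_indicator_lessThan)

lemma set_integrable_tails:
  "set_integrable lborel {0..1} (\<lambda>t. assortative_tail (mu t))"
  "set_integrable lborel {0..1}
    (\<lambda>t. equilibrium_tail (stage1_mass f s) (stage1_cdf t) (stage2_rank t))"
  "set_integrable lborel {0..1} (\<lambda>t. 1 - stage2_rank t)"
  "set_integrable lborel {0..1} (indicator {..<stage2_avg_quality f s} :: real \<Rightarrow> real)"
proof -
  show "set_integrable lborel {0..1} (indicator {..<stage2_avg_quality f s} :: real \<Rightarrow> real)"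
    by (rule set_integrable_bounded[where B=1]) auto
  show "set_integrable lborel {0..1} (\<lambda>t. assortative_tail (mu t))"
    using mu_bounds
    by (intro set_integrable_bounded[where B=1])
      (auto simp: assortative_tail_def power_le_one abs_le_iff order_trans[OF _ zero_le_power2])
  show "set_integrable lborel {0..1} (\<lambda>t. 1 - stage2_rank t)"
    using stage2_rank_bounds by (intro set_integrable_bounded[where B=1]) auto
  show "set_integrable lborel {0..1}
      (\<lambda>t. equilibrium_tail (stage1_mass f s) (stage1_cdf t) (stage2_rank t))"
  proof (rule set_integrable_bounded[where B=1])
    fix t
    have "0 \<le> (1 - stage1_mass f s) * (1 - stage2_rank t ^ 2)"
      and "(1 - stage1_mass f s) * (1 - stage2_rank t ^ 2) \<le> 1"
      using stage1_mass_nonneg stage1_mass_less_1 stage2_rank_bounds[of t]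
      by (auto simp: power_le_one intro!: mult_le_one)
    then show "\<bar>equilibrium_tail (stage1_mass f s) (stage1_cdf t) (stage2_rank t)\<bar> \<le> 1"
      using stage1_cdf_bounds[of t] stage1_mass_less_1
      unfolding equilibrium_tail_def abs_le_iff by argo
  qed (simp add: equilibrium_tail_def)
qed

end

theorem mainTheorem12:
  fixes f s :: "real \<Rightarrow> real"
  assumes "is_job_density f"
    and "early_eq f s"
  shows "welfare f (QT_inv f) \<le> 4/3 * welfare f (eq_ability f s)"
proof -
  interpret early_contracting_equilibrium f s
    using assms by (rule early_contracting_equilibrium.intro)
  have "3 * welfare f (QT_inv f) \<le> 4 * welfare f (eq_ability f s)"
  proof (cases "stage1_mass f s = 0")
    case True
    then show ?thesis using welfare_without_stage1 welfare_assortative_nonneg by simp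
  next
    case False
    then have pos: "0 < stage1_mass f s"
      using stage1_mass_nonneg by simp
    define c where "c = stage2_avg_quality f s"
    have "3 * welfare f (QT_inv f) = (LINT t:{0..1}|lborel. 3 * assortative_tail (mu t))"
      by (simp add: welfare_assortative)
    also have "\<dots> \<le> (LINT t:{0..1}|lborel.
        4 * equilibrium_tail (stage1_mass f s) (stage1_cdf t) (stage2_rank t)
          + ((1 - stage2_rank t) - indicator {..<c} t) / 3)"
      using assortative_tail_le[OF pos] set_integrable_tails
      by (intro set_integral_mono) (auto simp: c_def)
    also have "\<dots> = 4 * welfare f (eq_ability f s)
        + ((LINT t:{0..1}|lborel. 1 - stage2_rank t) - c) / 3"
      using set_integrable_tails set_integral_below_stage2_avg_quality[OF pos]
      by (simp add: welfare_equilibrium c_def)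
    also have "\<dots> \<le> 4 * welfare f (eq_ability f s)"
      using stage2_rank_integral_le by (simp add: c_def)
    finally show ?thesis .
  qed
  then show ?thesis by simp
qed

end
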